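(* Let $t\in\mathbb{R}$, $\mu>0$, $\sigma>0$, $\lambda>0$ with $\lambda\ge(\mu-t)_-$. Let $\mathcal{L}^+_{\lambda}(\mu,\sigma)$ be the set of probability distributions $F$ on $\mathbb{R}$ such that, for $X\sim F$, $\mathbb{E}^F[X]=\mu$, $\mathbb{E}^F[X^2]=\mu^2+\sigma^2$, $F(0-)=0$, and $\mathbb{E}^F[(X-t)_-]\le\lambda$. Then $\mathcal{L}^+_{\lambda}(\mu,\sigma)$ is non-empty if and only if either $\lambda>(\mu-t)_-$, or $\lambda=(\mu-t)_-$ and $\sigma^2\le\mu(t-\mu)$.
   Context: For $x\in\mathbb{R}$, $(x)_-=\max\{-x,0\}$. $F(0-)=\mathbb{P}(X<0)$ under $F$. *)

theory Defs
  imports "HOL-Probability.Probability"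
begin

definition negpart :: "real \<Rightarrow> real" where
  "negpart x = max (- x) 0"

definition Lplus :: "real \<Rightarrow> real \<Rightarrow> real \<Rightarrow> real \<Rightarrow> real measure set" where
  "Lplus t lam mu sig =
     {F. prob_space F \<and> sets F = sets borel \<and>
         integrable F (\<lambda>x. x) \<and> integrable F (\<lambda>x. x ^ 2) \<and>
         (\<integral>x. x \<partial>F) = mu \<and>
         (\<integral>x. x ^ 2 \<partial>F) = mu ^ 2 + sig ^ 2 \<and>
         measure F {..<0} = 0 \<and>
         integrable F (\<lambda>x. negpart (x - t)) \<and>
         (\<integral>x. negpart (x - t) \<partial>F) \<le> lam}"

end

theory Submission imports Defs begin

text \<open>Since \<open>(x - t)\<^sub>- \<ge> t - x\<close>, every \<open>F\<close> with mean \<open>\<mu>\<close> has \<open>E[(X - t)\<^sub>-] \<ge> t - \<mu>\<close>, with equality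
  only if \<open>X \<le> t\<close> almost surely. So when \<open>\<lambda> = t - \<mu>\<close> the support lies in \<open>[0, t]\<close>, whence
  \<open>X\<^sup>2 \<le> t X\<close> and \<open>\<mu>\<^sup>2 + \<sigma>\<^sup>2 \<le> t \<mu>\<close>. Conversely, for every \<open>0 < \<epsilon> \<le> \<mu>\<close> the law putting mass
  \<open>\<sigma>\<^sup>2 / (\<epsilon>\<^sup>2 + \<sigma>\<^sup>2)\<close> on \<open>\<mu> - \<epsilon>\<close> and \<open>\<epsilon>\<^sup>2 / (\<epsilon>\<^sup>2 + \<sigma>\<^sup>2)\<close> on \<open>\<mu> + \<sigma>\<^sup>2 / \<epsilon>\<close> is nonnegative with
  mean \<open>\<mu>\<close> and variance \<open>\<sigma>\<^sup>2\<close>. If \<open>\<lambda> > (\<mu> - t)\<^sub>-\<close>, a small \<epsilon> keeps \<open>E[(X - t)\<^sub>-] \<le> \<lambda>\<close>; if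
  \<open>\<lambda> = t - \<mu>\<close> and \<open>\<sigma>\<^sup>2 \<le> \<mu> (t - \<mu>)\<close>, the choice \<open>\<epsilon> = \<sigma>\<^sup>2 / (t - \<mu>)\<close> puts the upper atom at \<open>t\<close>.\<close>

lemma borel_measurable_negpart [measurable]: "negpart \<in> borel_measurable borel"
  unfolding negpart_def by measurable

lemma negpart_ge_neg: "- x \<le> negpart x"
  by (simp add: negpart_def)

lemma negpart_antimono: "x \<le> y \<Longrightarrow> negpart y \<le> negpart x"
  by (simp add: negpart_def)

lemma negpart_diff_le: "0 \<le> e \<Longrightarrow> negpart (x - e) \<le> negpart x + e"
  by (simp add: negpart_def)

lemma negpart_pos_imp_eq_neg: "0 < negpart x \<Longrightarrow> negpart x = - x"
  by (simp add: negpart_def max_def split: if_splits)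

lemma (in prob_space) AE_le_if_integral_negpart_diff_le:
  assumes "integrable M X" "integrable M (\<lambda>x. negpart (X x - t))"
    and "(\<integral>x. negpart (X x - t) \<partial>M) \<le> t - expectation X"
  shows "AE x in M. X x \<le> t"
proof -
  define gap where "gap x = negpart (X x - t) - (t - X x)" for x
  have gap_nonneg: "0 \<le> gap x" for x
    unfolding gap_def using negpart_ge_neg[of "X x - t"] by simp
  have "integrable M gap"
    unfolding gap_def using assms(1,2) by auto
  moreover have "integral\<^sup>L M gap = 0"
  proof -
    have "integral\<^sup>L M gap = (\<integral>x. negpart (X x - t) \<partial>M) - (t - expectation X)"
      unfolding gap_def using assms(1,2) by (simp add: prob_space)
    then show ?thesis
      using assms(3) gap_nonneg integral_nonneg_AE[of gap M] by simp
  qed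
  ultimately have "AE x in M. gap x = 0"
    using integral_nonneg_eq_0_iff_AE gap_nonneg by blast
  then show ?thesis
    by eventually_elim (auto simp: gap_def negpart_def)
qed

lemma Lplus_tight_imp_variance_le:
  assumes "F \<in> Lplus t (t - mu) mu sig"
  shows "sig ^ 2 \<le> mu * (t - mu)"
proof -
  from assms have "prob_space F" and sets_F: "sets F = sets borel"
    and int1: "integrable F (\<lambda>x. x)" and int2: "integrable F (\<lambda>x. x ^ 2)"
    and mean: "(\<integral>x. x \<partial>F) = mu" and second: "(\<integral>x. x ^ 2 \<partial>F) = mu ^ 2 + sig ^ 2"
    and neg_null: "measure F {..<0} = 0"
    and int_neg: "integrable F (\<lambda>x. negpart (x - t))"
    and tail: "(\<integral>x. negpart (x - t) \<partial>F) \<le> t - mu"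
    unfolding Lplus_def by auto
  interpret prob_space F by fact
  have "AE x in F. x \<le> t"
    using AE_le_if_integral_negpart_diff_le[OF int1 int_neg] tail mean by simp
  moreover have "AE x in F. 0 \<le> x"
  proof (rule AE_I')
    show "{..<(0::real)} \<in> null_sets F"
      using neg_null sets_F by (simp add: null_sets_def emeasure_eq_measure)
  qed (auto simp: sets_eq_imp_space_eq[OF sets_F])
  ultimately have "AE x in F. x ^ 2 \<le> t * x"
    by eventually_elim (simp add: power2_eq_square mult_right_mono)
  then have "(\<integral>x. x ^ 2 \<partial>F) \<le> (\<integral>x. t * x \<partial>F)"
    using int1 int2 by (intro integral_mono_AE) auto
  then show ?thesis
    using mean second by (simp add: algebra_simps power2_eq_square)
qed

definition two_point :: "real \<Rightarrow> real \<Rightarrow> real \<Rightarrow> real measure" where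
  "two_point p a b = distr (measure_pmf (bernoulli_pmf p)) borel (\<lambda>c. if c then b else a)"

lemma
  assumes "0 \<le> p" "p \<le> 1"
  shows prob_space_two_point: "prob_space (two_point p a b)"
    and sets_two_point: "sets (two_point p a b) = sets borel"
    and integrable_two_point: "g \<in> borel_measurable borel \<Longrightarrow> integrable (two_point p a b) g"
    and integral_two_point:
      "g \<in> borel_measurable borel \<Longrightarrow> (\<integral>x. g x \<partial>two_point p a b) = p * g b + (1 - p) * g a"
    and measure_two_point_neg: "0 \<le> a \<Longrightarrow> 0 \<le> b \<Longrightarrow> measure (two_point p a b) {..<0} = 0"
proof -
  have meas: "(\<lambda>c. if c then b else a) \<in> measurable (measure_pmf (bernoulli_pmf p)) borel"
    by simp
  show "prob_space (two_point p a b)"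
    unfolding two_point_def by (rule measure_pmf.prob_space_distr[OF meas])
  show "sets (two_point p a b) = sets borel"
    unfolding two_point_def by simp
  show "integrable (two_point p a b) g" if "g \<in> borel_measurable borel"
    unfolding two_point_def using that
    by (subst integrable_distr_eq[OF meas]) (auto intro: integrable_measure_pmf_finite)
  show "(\<integral>x. g x \<partial>two_point p a b) = p * g b + (1 - p) * g a" if "g \<in> borel_measurable borel"
    unfolding two_point_def using assms that
    by (subst integral_distr[OF meas]) (simp_all add: mult.commute)
  show "measure (two_point p a b) {..<0} = 0" if "0 \<le> a" "0 \<le> b"
    unfolding two_point_def using that by (subst measure_distr[OF meas]) (auto simp: vimage_def)
qed

definition balancing_weight :: "real \<Rightarrow> real \<Rightarrow> real" where
  "balancing_weight sig eps = eps ^ 2 / (eps ^ 2 + sig ^ 2)"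

lemma balancing_weight_bounds:
  assumes "sig \<noteq> 0"
  shows "0 \<le> balancing_weight sig eps" "balancing_weight sig eps \<le> 1"
  using assms by (simp_all add: balancing_weight_def add_nonneg_pos)

lemma balancing_weight_moments:
  fixes mu sig eps :: real
  assumes "eps \<noteq> 0" "sig \<noteq> 0"
  defines "p \<equiv> balancing_weight sig eps"
  shows "p * (mu + sig ^ 2 / eps) + (1 - p) * (mu - eps) = mu"
    and "p * (mu + sig ^ 2 / eps) ^ 2 + (1 - p) * (mu - eps) ^ 2 = mu ^ 2 + sig ^ 2"
proof -
  have "eps ^ 2 + sig ^ 2 \<noteq> 0"
    using assms by (simp add: add_pos_pos)
  then have balance: "p * (sig ^ 2 / eps) = (1 - p) * eps"
    using assms(1) unfolding p_def balancing_weight_def by (simp add: field_simps power2_eq_square)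
  then show "p * (mu + sig ^ 2 / eps) + (1 - p) * (mu - eps) = mu"
    by (simp add: algebra_simps)
  have "p * (mu + sig ^ 2 / eps) ^ 2 + (1 - p) * (mu - eps) ^ 2
      = mu ^ 2 + 2 * mu * (p * (sig ^ 2 / eps) - (1 - p) * eps)
        + (p * (sig ^ 2 / eps)) * (sig ^ 2 / eps) + ((1 - p) * eps) * eps"
    by (simp add: algebra_simps power2_eq_square)
  also have "\<dots> = mu ^ 2 + ((1 - p) * eps) * (sig ^ 2 / eps) + (p * (sig ^ 2 / eps)) * eps"
    using balance by simp
  also have "\<dots> = mu ^ 2 + sig ^ 2"
    using assms(1) by (simp add: field_simps)
  finally show "p * (mu + sig ^ 2 / eps) ^ 2 + (1 - p) * (mu - eps) ^ 2 = mu ^ 2 + sig ^ 2" .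
qed

lemma two_point_mem_Lplus:
  fixes t lam mu sig eps :: real
  assumes "0 < eps" "eps \<le> mu" "0 < sig"
  defines "p \<equiv> balancing_weight sig eps"
  assumes "p * negpart (mu + sig ^ 2 / eps - t) + (1 - p) * negpart (mu - eps - t) \<le> lam"
  shows "two_point p (mu - eps) (mu + sig ^ 2 / eps) \<in> Lplus t lam mu sig"
  using assms balancing_weight_bounds[of sig eps] balancing_weight_moments[of eps sig mu]
  by (simp add: Lplus_def prob_space_two_point sets_two_point integrable_two_point
      integral_two_point measure_two_point_neg)

lemma Lplus_nonempty_if_slack:
  assumes "0 < mu" "0 < sig" "negpart (mu - t) < lam"
  shows "Lplus t lam mu sig \<noteq> {}"
proof -
  define eps where "eps = min mu (lam - negpart (mu - t))"
  define p where "p = balancing_weight sig eps"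
  have eps: "0 < eps" "eps \<le> mu"
    unfolding eps_def using assms by auto
  have "0 \<le> p" "p \<le> 1"
    unfolding p_def using assms balancing_weight_bounds by auto
  have upper_le_lower: "negpart (mu + sig ^ 2 / eps - t) \<le> negpart (mu - eps - t)"
    using eps assms(2) by (intro negpart_antimono) (smt (verit) divide_pos_pos zero_less_power)
  have "negpart (mu - eps - t) \<le> negpart (mu - t) + eps"
    using negpart_diff_le[of eps "mu - t"] eps by (simp add: algebra_simps)
  then have lower_le: "negpart (mu - eps - t) \<le> lam"
    unfolding eps_def by linarith
  have "p * negpart (mu + sig ^ 2 / eps - t) + (1 - p) * negpart (mu - eps - t)
      \<le> p * lam + (1 - p) * lam"
    using \<open>0 \<le> p\<close> \<open>p \<le> 1\<close> upper_le_lower lower_le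
    by (intro add_mono mult_left_mono) auto
  also have "\<dots> = lam"
    by (simp add: algebra_simps)
  finally show ?thesis
    using two_point_mem_Lplus[OF eps assms(2), of t lam] unfolding p_def by auto
qed

lemma Lplus_nonempty_if_tight:
  assumes "0 < sig" "mu < t" "sig ^ 2 \<le> mu * (t - mu)"
  shows "Lplus t (t - mu) mu sig \<noteq> {}"
proof -
  define eps where "eps = sig ^ 2 / (t - mu)"
  define p where "p = balancing_weight sig eps"
  have eps: "0 < eps" "eps \<le> mu"
    unfolding eps_def using assms by (auto simp: divide_simps mult.commute)
  have upper_atom: "mu + sig ^ 2 / eps = t"
    unfolding eps_def using assms by simp
  have "p * negpart (mu + sig ^ 2 / eps - t) + (1 - p) * negpart (mu - eps - t)
      = t - (p * (mu + sig ^ 2 / eps) + (1 - p) * (mu - eps))"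
    using upper_atom eps assms(2) by (simp add: negpart_def algebra_simps)
  also have "\<dots> = t - mu"
    unfolding p_def using eps assms(1) by (simp add: balancing_weight_moments)
  finally show ?thesis
    using two_point_mem_Lplus[OF eps assms(1), of t "t - mu"] unfolding p_def by auto
qed

theorem proposition3:
  fixes t mu sig lam :: real
  assumes "mu > 0" and "sig > 0" and "lam > 0" and "lam \<ge> negpart (mu - t)"
  shows "Lplus t lam mu sig \<noteq> {} \<longleftrightarrow>
           (lam > negpart (mu - t) \<or>
            (lam = negpart (mu - t) \<and> sig ^ 2 \<le> mu * (t - mu)))"
proof (cases "lam > negpart (mu - t)")
  case True
  then show ?thesis
    using Lplus_nonempty_if_slack assms(1,2) by blast
next
  case False
  then have tight: "lam = negpart (mu - t)"
    using assms(4) by simp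
  then have lam: "lam = t - mu"
    using negpart_pos_imp_eq_neg assms(3) by fastforce
  show ?thesis
  proof
    assume "Lplus t lam mu sig \<noteq> {}"
    then obtain F where "F \<in> Lplus t (t - mu) mu sig"
      unfolding lam by blast
    then show "lam > negpart (mu - t) \<or> (lam = negpart (mu - t) \<and> sig ^ 2 \<le> mu * (t - mu))"
      using Lplus_tight_imp_variance_le tight by blast
  next
    assume "lam > negpart (mu - t) \<or> (lam = negpart (mu - t) \<and> sig ^ 2 \<le> mu * (t - mu))"
    then have "sig ^ 2 \<le> mu * (t - mu)"
      using False by blast
    then show "Lplus t lam mu sig \<noteq> {}"
      using Lplus_nonempty_if_tight assms(2,3) lam by simp
  qed
qed

end
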